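(* Let $(\lambda_k,\Gamma_k,\Theta_k)_{k\in\mathbb N}$ be a sequence in $\mathcal C_2$ with $\lim_{k\to\infty}\lambda_k=0$. Then it is not an infimizing sequence for $\tilde J$ on $\mathcal C_2$, i.e. $\tilde J(\lambda_k,\Gamma_k,\Theta_k)$ does not converge to $\inf_{\mathcal C_2}\tilde J$.
   Context: Notation: $\mathbf Q_n$ real symmetric $n\times n$ matrices; $\mathbf D_n$ diagonal matrices; $\mathbf M_n$ symmetric matrices with zero diagonal; $|\cdot|$ the determinant. $\hat\Sigma\in\mathbf Q_n$, $\hat\Sigma\succ0$. Let $\chi$ be the map keeping off-diagonal entries and zeroing the diagonal, $\delta_{max}:=\log|[\hat\Sigma^{-1}-\chi(\hat\Sigma^{-1})]\hat\Sigma|$, and assume $0<\delta<\delta_{max}$. Define $$\tilde J(\lambda,\Gamma,\Theta):=\lambda\Big(-\log\big|\hat\Sigma^{-1}+\lambda^{-1}(\chi(\Theta)-\Gamma)\big|-\log|\hat\Sigma|+\delta\Big),$$ $$\mathcal C_2:=\{(\lambda,\Gamma,\Theta):\ \lambda>0,\ I+\Gamma-\Theta\succeq0,\ \Gamma\succeq0,\ \Gamma\in\mathbf D_n,\ \Theta\in\mathbf M_n,\ \hat\Sigma^{-1}+\lambda^{-1}(\Theta-\Gamma)\succ0\}$$ (on $\mathcal C_2$, $\chi(\Theta)=\Theta$). *)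

theory Defs
  imports "HOL-Analysis.Analysis"
begin

definition sym_mat :: "real^'n^'n \<Rightarrow> bool" where
  "sym_mat A \<longleftrightarrow> transpose A = A"

definition psd :: "real^'n^'n \<Rightarrow> bool" where
  "psd A \<longleftrightarrow> sym_mat A \<and> (\<forall>x. 0 \<le> x \<bullet> (A *v x))"

definition pd :: "real^'n^'n \<Rightarrow> bool" where
  "pd A \<longleftrightarrow> sym_mat A \<and> (\<forall>x. x \<noteq> 0 \<longrightarrow> 0 < x \<bullet> (A *v x))"

definition diag_mat :: "real^'n^'n \<Rightarrow> bool" where
  "diag_mat A \<longleftrightarrow> (\<forall>i j. i \<noteq> j \<longrightarrow> A $ i $ j = 0)"

definition offdiag_sym :: "real^'n^'n \<Rightarrow> bool" where
  "offdiag_sym A \<longleftrightarrow> sym_mat A \<and> (\<forall>i. A $ i $ i = 0)"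

definition offd :: "real^'n^'n \<Rightarrow> real^'n^'n" where
  "offd A = (\<chi> i j. if i = j then 0 else A $ i $ j)"

definition delta_max :: "real^'n^'n \<Rightarrow> real" where
  "delta_max S = ln (det ((matrix_inv S - offd (matrix_inv S)) ** S))"

definition Jt :: "real^'n^'n \<Rightarrow> real \<Rightarrow> real \<Rightarrow> real^'n^'n \<Rightarrow> real^'n^'n \<Rightarrow> real" where
  "Jt S \<delta> lam G T =
     lam * (- ln (det (matrix_inv S + (1 / lam) *\<^sub>R (offd T - G))) - ln (det S) + \<delta>)"

definition C2 :: "real^'n^'n \<Rightarrow> (real \<times> (real^'n^'n) \<times> (real^'n^'n)) set" where
  "C2 S = {(lam, G, T). lam > 0 \<and> psd (mat 1 + G - T) \<and> psd G \<and> diag_mat G \<and>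
             offdiag_sym T \<and> pd (matrix_inv S + (1 / lam) *\<^sub>R (T - G))}"

end

theory Submission
  imports Defs
begin

text \<open>On \<open>C2\<close> the matrix \<open>A = \<Sigma>\<^sup>-\<^sup>1 + \<lambda>\<^sup>-\<^sup>1(\<Theta> - \<Gamma>)\<close> is positive definite, and since
  \<open>\<Gamma> \<succeq> 0\<close> while \<open>\<Theta>\<close> has zero diagonal, its diagonal is dominated by that of \<open>\<Sigma>\<^sup>-\<^sup>1\<close>.
  Positive definiteness bounds every entry by the diagonal, so \<open>det A\<close> is bounded uniformly
  on \<open>C2\<close> and \<open>J(\<lambda>,\<Gamma>,\<Theta>) \<ge> \<lambda> c\<close> for a constant \<open>c\<close>; along a sequence with \<open>\<lambda>\<^sub>k \<rightarrow> 0\<close> the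
  values therefore have limit inferior at least \<open>0\<close>. On the other hand \<open>\<Gamma> = 0\<close>,
  \<open>\<Theta> = -\<lambda> \<chi>(\<Sigma>\<^sup>-\<^sup>1)\<close> with \<open>\<lambda>\<close> small lies in \<open>C2\<close>, makes \<open>A\<close> the diagonal part of \<open>\<Sigma>\<^sup>-\<^sup>1\<close>
  and gives \<open>J = \<lambda>(\<delta> - \<delta>\<^sub>m\<^sub>a\<^sub>x) < 0\<close>, so the infimum is negative.\<close>

lemma quadratic_form_eq_sum:
  "x \<bullet> ((A::real^'n^'n) *v x) = (\<Sum>i\<in>UNIV. \<Sum>j\<in>UNIV. x$i * A$i$j * x$j)"
  by (simp add: inner_vec_def matrix_vector_mult_def sum_distrib_left mult.assoc)

lemma inner_axis_matrix_vector_mult_axis: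
  "axis i a \<bullet> ((A::real^'n^'n) *v axis j b) = a * A$i$j * b"
proof -
  have "(A *v axis j b) $ i = A$i$j * b"
    by (simp add: matrix_vector_mult_def axis_def if_distrib[where f="\<lambda>x. _ * x"] cong: if_cong)
  then show ?thesis by (simp add: inner_axis')
qed

lemma sym_mat_entry: "sym_mat (A::real^'n^'n) \<Longrightarrow> A$j$i = A$i$j"
  unfolding sym_mat_def by (metis transpose_def vec_lambda_beta)

lemma pd_imp_psd: "pd A \<Longrightarrow> psd A"
  unfolding pd_def psd_def by (metis inner_zero_left order_refl less_imp_le)

lemma psd_diag_nonneg: "psd (A::real^'n^'n) \<Longrightarrow> 0 \<le> A$i$i"
  unfolding psd_def by (metis inner_axis_matrix_vector_mult_axis mult_1 mult_1_right)

lemma pd_diag_pos: "pd (A::real^'n^'n) \<Longrightarrow> 0 < A$i$i"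
  unfolding pd_def
  by (metis axis_eq_0_iff inner_axis_matrix_vector_mult_axis mult_1 mult_1_right zero_neq_one)

lemma psd_abs_entry_le:
  assumes "psd (A::real^'n^'n)"
  shows "2 * \<bar>A$i$j\<bar> \<le> A$i$i + A$j$j"
proof -
  have "0 \<le> (axis i 1 + axis j s) \<bullet> (A *v (axis i 1 + axis j s))" for s :: real
    using assms unfolding psd_def by blast
  then have "0 \<le> A$i$i + s * (A$i$j + A$j$i) + s^2 * A$j$j" for s
    by (simp add: matrix_vector_right_distrib inner_add_left inner_add_right
        inner_axis_matrix_vector_mult_axis algebra_simps power2_eq_square)
  from this[of 1] this[of "-1"] show ?thesis
    using sym_mat_entry[of A i j] assms by (simp add: psd_def abs_if)
qed

lemma pd_det_nonzero:
  assumes "pd (A::real^'n^'n)"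
  shows "det A \<noteq> 0"
proof -
  have "inj ((*v) A)"
  proof (rule injI)
    fix x y assume "A *v x = A *v y"
    then have "A *v (x - y) = 0" by (simp add: matrix_vector_mult_diff_distrib)
    then show "x = y"
      using assms unfolding pd_def by (metis inner_zero_right less_irrefl right_minus_eq)
  qed
  then show ?thesis using det_eq_0_rank less_rank_noninjective by blast
qed

lemma pd_det_pos:
  assumes "pd (A::real^'n^'n)"
  shows "0 < det A"
proof (rule ccontr)
  assume "\<not> 0 < det A"
  \<comment> \<open>Every matrix on the segment from the identity to \<open>A\<close> is positive definite, hence
    nonsingular, so by continuity \<open>det\<close> cannot change sign along it.\<close>
  define M where "M t = (1 - t) *\<^sub>R (mat 1::real^'n^'n) + t *\<^sub>R A" for t :: real
  have pd_M: "pd (M t)" if "0 \<le> t" "t \<le> 1" for t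
    unfolding pd_def
  proof (intro conjI allI impI)
    show "sym_mat (M t)"
      using assms unfolding M_def pd_def sym_mat_def by (simp add: transpose_def vec_eq_iff mat_def)
    fix x :: "real^'n" assume "x \<noteq> 0"
    then have "0 < x \<bullet> x" "0 < x \<bullet> (A *v x)" using assms unfolding pd_def by auto
    then have "0 < (1 - t) * (x \<bullet> x) + t * (x \<bullet> (A *v x))"
      using that by (cases "t = 0") (auto intro: add_nonneg_pos)
    then show "0 < x \<bullet> (M t *v x)"
      unfolding M_def by (simp add: matrix_vector_mult_add_rdistrib inner_add_right
          scaleR_matrix_vector_assoc[symmetric])
  qed
  have "continuous_on {0..1} (\<lambda>t. det (M t))"
    unfolding det_def M_def by (simp add: mat_def) (intro continuous_intros)
  moreover have "det (M 1) \<le> 0" "0 \<le> det (M 0)"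
    using \<open>\<not> 0 < det A\<close> by (simp_all add: M_def)
  ultimately obtain t where "0 \<le> t" "t \<le> 1" "det (M t) = 0"
    using IVT2'[of "\<lambda>t. det (M t)" 1 0 0] by auto
  with pd_det_nonzero[OF pd_M] show False by blast
qed

lemma pd_matrix_inv_inverse:
  assumes "pd (S::real^'n^'n)"
  shows "S ** matrix_inv S = mat 1" "matrix_inv S ** S = mat 1"
proof -
  have "\<exists>A'. S ** A' = mat 1 \<and> A' ** S = mat 1"
    using pd_det_nonzero[OF assms] invertible_det_nz unfolding invertible_def by blast
  from someI_ex[OF this] show "S ** matrix_inv S = mat 1" "matrix_inv S ** S = mat 1"
    unfolding matrix_inv_def by auto
qed

lemma pd_matrix_inv:
  assumes "pd (S::real^'n^'n)"
  shows "pd (matrix_inv S)"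
proof -
  let ?I = "matrix_inv S"
  note inverse = pd_matrix_inv_inverse[OF assms]
  have "transpose S = S" using assms unfolding pd_def sym_mat_def by simp
  then have "transpose ?I ** S = mat 1"
    using inverse(1) by (metis matrix_transpose_mul transpose_mat)
  then have "transpose ?I = ?I"
    by (metis inverse(1) matrix_mul_assoc matrix_mul_lid matrix_mul_rid)
  moreover have "0 < x \<bullet> (?I *v x)" if "x \<noteq> 0" for x
  proof -
    have S_y: "S *v (?I *v x) = x" by (simp add: matrix_vector_mul_assoc inverse(1))
    then have "0 < (?I *v x) \<bullet> (S *v (?I *v x))"
      using assms \<open>x \<noteq> 0\<close> unfolding pd_def by (metis matrix_vector_mult_0_right)
    then show ?thesis unfolding S_y by (simp add: inner_commute)
  qed
  ultimately show ?thesis unfolding pd_def sym_mat_def by blast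
qed

lemma abs_det_le_entry_bound:
  assumes "\<And>i j. \<bar>(A::real^'n^'n)$i$j\<bar> \<le> b"
  shows "\<bar>det A\<bar> \<le> fact CARD('n) * b ^ CARD('n)"
proof -
  have "\<bar>det A\<bar> \<le> (\<Sum>p\<in>{p. p permutes (UNIV::'n set)}. \<bar>of_int (sign p) * (\<Prod>i\<in>UNIV. A$i$p i)\<bar>)"
    unfolding det_def by (rule sum_abs)
  also have "\<dots> \<le> (\<Sum>p\<in>{p. p permutes (UNIV::'n set)}. b ^ CARD('n))"
  proof (rule sum_mono)
    fix p :: "'n \<Rightarrow> 'n"
    have "\<bar>real_of_int (sign p)\<bar> = 1" by (metis abs_sign of_int_1 of_int_abs)
    then have "\<bar>of_int (sign p) * (\<Prod>i\<in>UNIV. A$i$p i)\<bar> = (\<Prod>i\<in>UNIV. \<bar>A$i$p i\<bar>)"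
      by (simp add: abs_mult abs_prod)
    also have "\<dots> \<le> (\<Prod>i\<in>(UNIV::'n set). b)"
      by (rule prod_mono) (simp add: assms)
    finally show "\<bar>of_int (sign p) * (\<Prod>i\<in>UNIV. A$i$p i)\<bar> \<le> b ^ CARD('n)" by simp
  qed
  finally show ?thesis by (simp add: card_permutations)
qed

lemma pd_det_le_diag_bound:
  assumes "pd (A::real^'n^'n)" and "\<And>i. A$i$i \<le> b"
  shows "det A \<le> fact CARD('n) * b ^ CARD('n)"
proof -
  have "\<bar>A$i$j\<bar> \<le> b" for i j
    using psd_abs_entry_le[OF pd_imp_psd[OF assms(1)], of i j] assms(2)[of i] assms(2)[of j]
    by linarith
  then show ?thesis using abs_det_le_entry_bound by fastforce
qed

lemma abs_quadratic_form_le: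
  "\<bar>x \<bullet> ((M::real^'n^'n) *v x)\<bar> \<le> (\<Sum>i\<in>UNIV. \<Sum>j\<in>UNIV. \<bar>M$i$j\<bar>) * (x \<bullet> x)"
proof -
  have "\<bar>x$i * x$j\<bar> \<le> x \<bullet> x" for i j
  proof -
    have "\<bar>x$i * x$j\<bar> \<le> norm x * norm x"
      unfolding abs_mult by (rule mult_mono) (auto simp: component_le_norm_cart)
    then show ?thesis by (simp add: dot_square_norm power2_eq_square)
  qed
  then have "\<bar>x$i * M$i$j * x$j\<bar> \<le> \<bar>M$i$j\<bar> * (x \<bullet> x)" for i j
    by (metis abs_ge_zero abs_mult mult.commute mult.left_commute mult_left_mono)
  then have "(\<Sum>i\<in>UNIV. \<Sum>j\<in>UNIV. \<bar>x$i * M$i$j * x$j\<bar>) \<le> (\<Sum>i\<in>UNIV. \<Sum>j\<in>UNIV. \<bar>M$i$j\<bar> * (x \<bullet> x))"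
    by (intro sum_mono)
  moreover have "\<bar>x \<bullet> (M *v x)\<bar> \<le> (\<Sum>i\<in>UNIV. \<Sum>j\<in>UNIV. \<bar>x$i * M$i$j * x$j\<bar>)"
    unfolding quadratic_form_eq_sum by (rule order_trans[OF sum_abs sum_mono]) (rule sum_abs)
  ultimately show ?thesis by (simp add: sum_distrib_right)
qed

lemma psd_mat_1_add_scaled:
  assumes "sym_mat (M::real^'n^'n)" and "0 \<le> t" and "t * (\<Sum>i\<in>UNIV. \<Sum>j\<in>UNIV. \<bar>M$i$j\<bar>) \<le> 1"
  shows "psd (mat 1 + t *\<^sub>R M)"
  unfolding psd_def
proof (intro conjI allI)
  show "sym_mat (mat 1 + t *\<^sub>R M)"
    using assms(1) unfolding sym_mat_def by (simp add: vec_eq_iff transpose_def mat_def)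
  fix x :: "real^'n"
  have "t * \<bar>x \<bullet> (M *v x)\<bar> \<le> t * (\<Sum>i\<in>UNIV. \<Sum>j\<in>UNIV. \<bar>M$i$j\<bar>) * (x \<bullet> x)"
    using mult_left_mono[OF abs_quadratic_form_le assms(2)] by (simp add: mult.assoc)
  also have "\<dots> \<le> x \<bullet> x"
    using mult_right_mono[OF assms(3), of "x \<bullet> x"] by simp
  moreover have "t * (- \<bar>x \<bullet> (M *v x)\<bar>) \<le> t * (x \<bullet> (M *v x))"
    using assms(2) by (intro mult_left_mono) auto
  ultimately have "0 \<le> x \<bullet> x + t * (x \<bullet> (M *v x))"
    by simp
  then show "0 \<le> x \<bullet> ((mat 1 + t *\<^sub>R M) *v x)"
    by (simp add: matrix_vector_mult_add_rdistrib inner_add_right scaleR_matrix_vector_assoc[symmetric])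
qed

lemma offd_eq_self: "(\<And>i. (A::real^'n^'n)$i$i = 0) \<Longrightarrow> offd A = A"
  unfolding offd_def by (simp add: vec_eq_iff)

lemma sym_mat_offd: "sym_mat (A::real^'n^'n) \<Longrightarrow> sym_mat (offd A)"
  unfolding sym_mat_def offd_def transpose_def
  by (simp add: vec_eq_iff sym_mat_entry[unfolded sym_mat_def])

lemma pd_minus_offd:
  assumes "pd (A::real^'n^'n)"
  shows "pd (A - offd A)"
  unfolding pd_def
proof (intro conjI allI impI)
  have entry: "(A - offd A)$i$j = (if i = j then A$i$i else 0)" for i j
    by (simp add: offd_def)
  show "sym_mat (A - offd A)"
    unfolding sym_mat_def by (simp add: vec_eq_iff transpose_def offd_def)
  fix x :: "real^'n" assume "x \<noteq> 0"
  then obtain i where "x$i \<noteq> 0" by (auto simp: vec_eq_iff)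
  then have "0 < A$i$i * (x$i)\<^sup>2" using pd_diag_pos[OF assms] by simp
  also have "\<dots> \<le> (\<Sum>j\<in>UNIV. A$j$j * (x$j)\<^sup>2)"
    by (rule member_le_sum) (auto intro!: mult_nonneg_nonneg less_imp_le[OF pd_diag_pos[OF assms]])
  also have "\<dots> = x \<bullet> ((A - offd A) *v x)"
    unfolding quadratic_form_eq_sum entry
    by (simp add: if_distrib[where f="\<lambda>y. _ * y"] if_distribR power2_eq_square
        mult.commute mult.left_commute cong: if_cong)
  finally show "0 < x \<bullet> ((A - offd A) *v x)" .
qed

lemma C2_Jt_lower_bound:
  fixes S :: "real^'n^'n"
  assumes "pd S"
  obtains c where "\<And>l G T. (l, G, T) \<in> C2 S \<Longrightarrow> l * c \<le> Jt S \<delta> l G T"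
proof
  define b where "b = (\<Sum>i\<in>UNIV. \<bar>matrix_inv S$i$i\<bar>)"
  fix l G T assume "(l, G, T) \<in> C2 S"
  then have "0 < l" "psd G" and T: "offdiag_sym T"
    and pd_A: "pd (matrix_inv S + (1 / l) *\<^sub>R (T - G))" (is "pd ?A")
    unfolding C2_def by auto
  have diag_le: "?A$i$i \<le> b" for i
  proof -
    have "?A$i$i \<le> matrix_inv S$i$i"
      using psd_diag_nonneg[OF \<open>psd G\<close>, of i] T \<open>0 < l\<close> by (simp add: offdiag_sym_def)
    also have "\<dots> \<le> b"
      unfolding b_def by (rule order_trans[OF abs_ge_self], rule member_le_sum) auto
    finally show ?thesis .
  qed
  have "ln (det ?A) \<le> ln (fact CARD('n) * b ^ CARD('n))"
    by (rule ln_mono[OF pd_det_le_diag_bound[OF pd_A diag_le] pd_det_pos[OF pd_A]])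
  moreover have "offd T = T" using T offd_eq_self unfolding offdiag_sym_def by blast
  ultimately show "l * (- ln (fact CARD('n) * b ^ CARD('n)) - ln (det S) + \<delta>) \<le> Jt S \<delta> l G T"
    unfolding Jt_def using \<open>0 < l\<close> by (simp add: mult_left_mono)
qed

lemma diagonal_point_in_C2:
  assumes "pd S" and "0 < l"
    and "l * (\<Sum>i\<in>UNIV. \<Sum>j\<in>UNIV. \<bar>offd (matrix_inv S)$i$j\<bar>) \<le> 1"
  shows "(l, 0, - (l *\<^sub>R offd (matrix_inv S))) \<in> C2 S"
proof -
  have sym: "sym_mat (offd (matrix_inv S))"
    using pd_matrix_inv[OF assms(1)] sym_mat_offd unfolding pd_def by blast
  have "psd (mat 1 + l *\<^sub>R offd (matrix_inv S))"
    using psd_mat_1_add_scaled[OF sym] assms(2,3) by simp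
  moreover have "offdiag_sym (- (l *\<^sub>R offd (matrix_inv S)))"
    using sym unfolding offdiag_sym_def sym_mat_def
    by (simp add: vec_eq_iff transpose_def) (simp add: offd_def)
  moreover have "matrix_inv S + (1 / l) *\<^sub>R (- (l *\<^sub>R offd (matrix_inv S)))
      = matrix_inv S - offd (matrix_inv S)"
    using assms(2) by simp
  ultimately show ?thesis
    using assms(2) pd_minus_offd[OF pd_matrix_inv[OF assms(1)]]
    unfolding C2_def by (simp add: psd_def pd_def diag_mat_def sym_mat_def transpose_def vec_eq_iff)
qed

lemma Jt_diagonal_point:
  assumes "pd S" and "0 < l"
  shows "Jt S \<delta> l 0 (- (l *\<^sub>R offd (matrix_inv S))) = l * (\<delta> - delta_max S)"
proof -
  let ?D = "matrix_inv S - offd (matrix_inv S)"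
  have "offd (- (l *\<^sub>R offd (matrix_inv S))) = - (l *\<^sub>R offd (matrix_inv S))"
    by (rule offd_eq_self) (simp add: offd_def)
  then have diag_part: "matrix_inv S + (1 / l) *\<^sub>R (offd (- (l *\<^sub>R offd (matrix_inv S))) - 0) = ?D"
    using assms(2) by simp
  have delta_max: "delta_max S = ln (det ?D) + ln (det S)"
    unfolding delta_max_def det_mul
    using pd_det_pos[OF pd_minus_offd[OF pd_matrix_inv[OF assms(1)]]] pd_det_pos[OF assms(1)]
    by (simp add: ln_mult)
  show ?thesis unfolding Jt_def diag_part delta_max by (simp add: algebra_simps)
qed

lemma INF_C2_Jt_neg:
  assumes "pd S" and "\<delta> < delta_max S"
  shows "(INF p\<in>C2 S. ereal (case p of (l, g, t) \<Rightarrow> Jt S \<delta> l g t)) < 0"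
proof -
  define l where "l = 1 / ((\<Sum>i\<in>UNIV. \<Sum>j\<in>UNIV. \<bar>offd (matrix_inv S)$i$j\<bar>) + 1)"
  have "0 \<le> (\<Sum>i\<in>UNIV. \<Sum>j\<in>UNIV. \<bar>offd (matrix_inv S)$i$j\<bar>)"
    by (intro sum_nonneg) auto
  then have "0 < l" "l * (\<Sum>i\<in>UNIV. \<Sum>j\<in>UNIV. \<bar>offd (matrix_inv S)$i$j\<bar>) \<le> 1"
    unfolding l_def by (simp_all add: field_simps)
  then have "(INF p\<in>C2 S. ereal (case p of (l, g, t) \<Rightarrow> Jt S \<delta> l g t))
      \<le> ereal (l * (\<delta> - delta_max S))"
    using diagonal_point_in_C2[OF assms(1)] Jt_diagonal_point[OF assms(1)]
    by (intro INF_lower2) fastforce+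
  also have "\<dots> < 0" using \<open>0 < l\<close> assms(2) by (simp add: mult_pos_neg)
  finally show ?thesis .
qed

theorem lemma1:
  fixes S :: "real^'n^'n" and \<delta> :: real
    and lam :: "nat \<Rightarrow> real" and G T :: "nat \<Rightarrow> real^'n^'n"
  assumes "pd S"
    and "0 < \<delta>" and "\<delta> < delta_max S"
    and "\<And>k. (lam k, G k, T k) \<in> C2 S"
    and "lam \<longlonglongrightarrow> 0"
  shows "\<not> ((\<lambda>k. ereal (Jt S \<delta> (lam k) (G k) (T k)))
             \<longlonglongrightarrow> (INF p\<in>C2 S. ereal (case p of (l, g, t) \<Rightarrow> Jt S \<delta> l g t)))"
proof
  assume lim: "(\<lambda>k. ereal (Jt S \<delta> (lam k) (G k) (T k)))
      \<longlonglongrightarrow> (INF p\<in>C2 S. ereal (case p of (l, g, t) \<Rightarrow> Jt S \<delta> l g t))"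
  obtain c where c: "\<And>k. lam k * c \<le> Jt S \<delta> (lam k) (G k) (T k)"
    using C2_Jt_lower_bound[OF assms(1)] assms(4) by metis
  have "(\<lambda>k. ereal (lam k * c)) \<longlonglongrightarrow> ereal (0 * c)"
    by (intro tendsto_intros assms(5))
  then have "(\<lambda>k. ereal (lam k * c)) \<longlonglongrightarrow> ereal 0"
    by simp
  then have "ereal 0 \<le> (INF p\<in>C2 S. ereal (case p of (l, g, t) \<Rightarrow> Jt S \<delta> l g t))"
    by (rule LIMSEQ_le[OF _ lim]) (use c in auto)
  with INF_C2_Jt_neg[OF assms(1,3)] show False by (simp add: zero_ereal_def)
qed

end
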